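(* Consider an instance of $P|G=\textit{block graph},p_j=1|C_{\max}$ with $m\ge 2$ identical machines and $n\ge 1$ unit-time jobs whose block conflict graph $G$ has $\omega(G)\le m$, and write $n=d(m-1)+r$ with integers $d\ge 0$ and $r\in\{0,\dots,m-2\}$. The greedy algorithm described in the context returns a schedule in which every machine is assigned at most $\lceil n/(m-1)\rceil$ jobs. Moreover, if $r=0$ then at least one machine is assigned strictly fewer than $\lceil n/(m-1)\rceil$ jobs, and if $r>0$ then at least $m-r$ machines are assigned strictly fewer than $\lceil n/(m-1)\rceil$ jobs.
   Context: Scheduling with a conflict graph: jobs $J$, machines $M=\{M_1,\dots,M_m\}$, conflict graph $G=(J,E)$; a schedule is a map $\sigma:J\to M$ with adjacent jobs on different machines. Here all processing times are $1$, so a machine's load is the number of jobs assigned to it. A block graph is a graph in which every maximal 2-connected component is a clique; a block is a maximal clique; a cut-vertex is a vertex in at least two blocks. The block-cut forest $T_G$ has a node for each block and each cut-vertex, with a block node adjacent to a cut-vertex node iff the cut-vertex lies in the block; each component is rooted arbitrarily. Greedy algorithm: list the blocks in the order of a pre-order traversal of (each component of) the rooted block-cut forest. Process the blocks in this order. For the current block $B$, let $L_J$ be the jobs of $B$ (sorted by non-increasing processing time) and let $L_M$ be the $|B|$ machines of smallest current load, sorted by non-decreasing current load (ties broken arbitrarily). If $B$ has a parent cut-vertex $u$ in $T_G$ that has already been assigned to some machine $M'$, then: if $M'\in L_M$ remove $M'$ from $L_M$, otherwise remove the last machine of $L_M$; and remove $u$ from $L_J$. Then assign the $i$-th job of $L_J$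 to the $i$-th machine of $L_M$ for $i=1,\dots,|L_M|$, updating loads. *)

theory Defs
  imports Complex_Main
begin

text \<open>Conflict graph: finite job set J, symmetric irreflexive edge relation E on J.
  Machines are 0,...,m-1. A (partial) schedule is a map from jobs to machines.\<close>

definition graph :: "'a set \<Rightarrow> ('a \<Rightarrow> 'a \<Rightarrow> bool) \<Rightarrow> bool" where
  "graph J E \<longleftrightarrow> finite J \<and> (\<forall>x y. E x y \<longrightarrow> x \<in> J \<and> y \<in> J) \<and>
     (\<forall>x y. E x y \<longrightarrow> E y x) \<and> (\<forall>x. \<not> E x x)"

definition clique :: "'a set \<Rightarrow> ('a \<Rightarrow> 'a \<Rightarrow> bool) \<Rightarrow> 'a set \<Rightarrow> bool" where
  "clique J E S \<longleftrightarrow> S \<subseteq> J \<and> (\<forall>x\<in>S. \<forall>y\<in>S. x \<noteq> y \<longrightarrow> E x y)"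

definition clique_num_le :: "'a set \<Rightarrow> ('a \<Rightarrow> 'a \<Rightarrow> bool) \<Rightarrow> nat \<Rightarrow> bool" where
  "clique_num_le J E m \<longleftrightarrow> (\<forall>S. clique J E S \<longrightarrow> card S \<le> m)"

definition connected_on :: "('a \<Rightarrow> 'a \<Rightarrow> bool) \<Rightarrow> 'a set \<Rightarrow> bool" where
  "connected_on E S \<longleftrightarrow> (\<forall>x\<in>S. \<forall>y\<in>S. (\<lambda>a b. a \<in> S \<and> b \<in> S \<and> E a b)\<^sup>*\<^sup>* x y)"

text \<open>S induces a 2-connected subgraph (at least two vertices, connected, no cut vertex;
  a single edge counts as 2-connected).\<close>
definition two_connected :: "'a set \<Rightarrow> ('a \<Rightarrow> 'a \<Rightarrow> bool) \<Rightarrow> 'a set \<Rightarrow> bool" where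
  "two_connected J E S \<longleftrightarrow> S \<subseteq> J \<and> card S \<ge> 2 \<and> connected_on E S \<and>
     (\<forall>v\<in>S. connected_on E (S - {v}))"

definition block_graph :: "'a set \<Rightarrow> ('a \<Rightarrow> 'a \<Rightarrow> bool) \<Rightarrow> bool" where
  "block_graph J E \<longleftrightarrow> (\<forall>S. two_connected J E S \<and>
       (\<forall>T. two_connected J E T \<and> S \<subseteq> T \<longrightarrow> T = S) \<longrightarrow> clique J E S)"

definition is_block :: "'a set \<Rightarrow> ('a \<Rightarrow> 'a \<Rightarrow> bool) \<Rightarrow> 'a set \<Rightarrow> bool" where
  "is_block J E B \<longleftrightarrow> clique J E B \<and> B \<noteq> {} \<and> (\<forall>T. clique J E T \<and> B \<subseteq> T \<longrightarrow> T = B)"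

definition is_cut :: "'a set \<Rightarrow> ('a \<Rightarrow> 'a \<Rightarrow> bool) \<Rightarrow> 'a \<Rightarrow> bool" where
  "is_cut J E v \<longleftrightarrow> (\<exists>B1 B2. is_block J E B1 \<and> is_block J E B2 \<and> B1 \<noteq> B2 \<and> v \<in> B1 \<and> v \<in> B2)"

text \<open>Nodes and edges of the block-cut forest T_G: Inl B for a block, Inr v for a cut vertex.\<close>
definition bc_node :: "'a set \<Rightarrow> ('a \<Rightarrow> 'a \<Rightarrow> bool) \<Rightarrow> ('a set + 'a) \<Rightarrow> bool" where
  "bc_node J E x \<longleftrightarrow> (case x of Inl B \<Rightarrow> is_block J E B | Inr v \<Rightarrow> is_cut J E v)"

definition bc_adj :: "'a set \<Rightarrow> ('a \<Rightarrow> 'a \<Rightarrow> bool) \<Rightarrow> ('a set + 'a) \<Rightarrow> ('a set + 'a) \<Rightarrow> bool" where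
  "bc_adj J E x y \<longleftrightarrow>
     (\<exists>B v. is_block J E B \<and> is_cut J E v \<and> v \<in> B \<and>
        ((x = Inl B \<and> y = Inr v) \<or> (x = Inr v \<and> y = Inl B)))"

text \<open>Nodes with no
  parent are the roots (one per component).\<close>
definition rooting :: "'a set \<Rightarrow> ('a \<Rightarrow> 'a \<Rightarrow> bool) \<Rightarrow> (('a set + 'a) \<Rightarrow> ('a set + 'a) option) \<Rightarrow> bool" where
  "rooting J E par \<longleftrightarrow>
     (\<forall>x y. par x = Some y \<longrightarrow> bc_node J E x \<and> bc_adj J E x y) \<and>
     (\<forall>x y. bc_adj J E x y \<longrightarrow> par x = Some y \<or> par y = Some x) \<and>
     (\<forall>x. \<not> (\<lambda>a b. par a = Some b)\<^sup>+\<^sup>+ x x)"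

text \<open>anc par x y: x is an ancestor of y or x = y.\<close>
definition anc :: "('n \<Rightarrow> 'n option) \<Rightarrow> 'n \<Rightarrow> 'n \<Rightarrow> bool" where
  "anc par x y \<longleftrightarrow> (\<lambda>a b. par a = Some b)\<^sup>*\<^sup>* y x"

definition preorder_traversal :: "('n \<Rightarrow> 'n option) \<Rightarrow> 'n set \<Rightarrow> 'n list \<Rightarrow> bool" where
  "preorder_traversal par N ns \<longleftrightarrow> distinct ns \<and> set ns = N \<and>
     (\<forall>i j. i < length ns \<and> j < length ns \<and> anc par (ns ! i) (ns ! j) \<longrightarrow> i \<le> j) \<and>
     (\<forall>i j k. i < j \<and> j < k \<and> k < length ns \<and> anc par (ns ! i) (ns ! k) \<longrightarrow> anc par (ns ! i) (ns ! j))"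

definition load :: "('a \<rightharpoonup> nat) \<Rightarrow> nat \<Rightarrow> nat" where
  "load \<sigma> M = card {j. \<sigma> j = Some M}"

text \<open>Ls lists k machines of smallest current load, sorted by non-decreasing load
  (ties broken arbitrarily).\<close>
definition smallest_machines :: "nat \<Rightarrow> ('a \<rightharpoonup> nat) \<Rightarrow> nat \<Rightarrow> nat list \<Rightarrow> bool" where
  "smallest_machines m \<sigma> k Ls \<longleftrightarrow> distinct Ls \<and> length Ls = k \<and> set Ls \<subseteq> {..<m} \<and>
     sorted (map (load \<sigma>) Ls) \<and>
     (\<forall>M \<in> {..<m} - set Ls. \<forall>M' \<in> set Ls. load \<sigma> M' \<le> load \<sigma> M)"

definition assigned_parent :: "(('a set + 'a) \<Rightarrow> ('a set + 'a) option) \<Rightarrow> ('a \<rightharpoonup> nat) \<Rightarrow> 'a set \<Rightarrow> 'a option" where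
  "assigned_parent par \<sigma> B =
     (case par (Inl B) of Some (Inr u) \<Rightarrow> (if \<sigma> u \<noteq> None then Some u else None) | _ \<Rightarrow> None)"

definition greedy_step :: "nat \<Rightarrow> ('a \<rightharpoonup> nat) \<Rightarrow> 'a set \<Rightarrow> 'a option \<Rightarrow> ('a \<rightharpoonup> nat) \<Rightarrow> bool" where
  "greedy_step m \<sigma> B pu \<sigma>' \<longleftrightarrow>
     (\<exists>Ls Lj. smallest_machines m \<sigma> (card B) Ls \<and> distinct Lj \<and> set Lj = B \<and>
       (case pu of
          None \<Rightarrow> \<sigma>' = \<sigma> ++ map_of (zip Lj Ls)
        | Some u \<Rightarrow> (\<exists>M'. \<sigma> u = Some M' \<and>
             \<sigma>' = \<sigma> ++ map_of (zip (remove1 u Lj)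
                        (if M' \<in> set Ls then remove1 M' Ls else butlast Ls)))))"

inductive greedy_exec :: "nat \<Rightarrow> (('a set + 'a) \<Rightarrow> ('a set + 'a) option) \<Rightarrow> ('a \<rightharpoonup> nat) \<Rightarrow> 'a set list \<Rightarrow> ('a \<rightharpoonup> nat) \<Rightarrow> bool"
  for m par where
  exec_nil: "greedy_exec m par \<sigma> [] \<sigma>"
| exec_cons: "greedy_step m \<sigma> B (assigned_parent par \<sigma> B) \<sigma>' \<Longrightarrow> greedy_exec m par \<sigma>' Bs \<sigma>''
         \<Longrightarrow> greedy_exec m par \<sigma> (B # Bs) \<sigma>''"

text \<open>sigma is a possible output of the greedy algorithm (for some rooting, some pre-order
  traversal and some tie-breaking).\<close>
definition greedy_output :: "'a set \<Rightarrow> ('a \<Rightarrow> 'a \<Rightarrow> bool) \<Rightarrow> nat \<Rightarrow> ('a \<rightharpoonup> nat) \<Rightarrow> bool" where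
  "greedy_output J E m \<sigma> \<longleftrightarrow>
     (\<exists>par ns. rooting J E par \<and> preorder_traversal par {x. bc_node J E x} ns \<and>
        greedy_exec m par Map.empty (map projl (filter isl ns)) \<sigma>)"

definition is_schedule :: "'a set \<Rightarrow> ('a \<Rightarrow> 'a \<Rightarrow> bool) \<Rightarrow> nat \<Rightarrow> ('a \<rightharpoonup> nat) \<Rightarrow> bool" where
  "is_schedule J E m \<sigma> \<longleftrightarrow> dom \<sigma> = J \<and> ran \<sigma> \<subseteq> {..<m} \<and>
     (\<forall>x y. E x y \<longrightarrow> \<sigma> x \<noteq> \<sigma> y)"

end

theory Submission imports Defs begin

text \<open>
  With unit jobs, the greedy algorithm keeps the loads as even as if the \<open>s\<close> jobs assigned so
  far had been spread over only \<open>m - 1\<close> machines: every load is at most \<open>s div (m - 1) + 1\<close>,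
  and at most \<open>s mod (m - 1)\<close> machines exceed \<open>s div (m - 1)\<close>. This invariant survives a
  step because, in a pre-order of the block-cut forest, a block meets the earlier blocks at most
  in its parent cut vertex, which is already placed; so the fresh jobs of the block go to distinct
  machines among the \<open>|B|\<close> least loaded ones, missing at most one of them. If a machine
  receiving a job was already above the base level, then so is every machine outside the \<open>|B|\<close>
  least loaded ones, and the invariant bounds how many there are. For \<open>s = n = d (m - 1) + r\<close> this gives the bound
  \<open>\<lceil>n / (m - 1)\<rceil>\<close> and at most \<open>r\<close> machines attaining it; for \<open>r = 0\<close> not all \<open>m\<close>
  machines can carry \<open>d\<close> jobs, as there are only \<open>(m - 1) d\<close> of them.
\<close>

section \<open>Balanced load vectors\<close>

definition least_loaded :: "nat \<Rightarrow> (nat \<Rightarrow> nat) \<Rightarrow> nat set \<Rightarrow> bool" where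
  "least_loaded m f T \<longleftrightarrow> T \<subseteq> {..<m} \<and> (\<forall>M\<in>T. \<forall>M'\<in>{..<m} - T. f M \<le> f M')"

definition balanced_loads :: "nat \<Rightarrow> (nat \<Rightarrow> nat) \<Rightarrow> nat \<Rightarrow> bool" where
  "balanced_loads m f s \<longleftrightarrow>
     (\<forall>M<m. f M \<le> s div (m - 1) + 1) \<and> card {M. M < m \<and> s div (m - 1) < f M} \<le> s mod (m - 1)"

lemma least_loaded_overloaded_card:
  assumes T: "least_loaded m f T" "S \<subseteq> T" "card T \<le> card S + 1"
    and M0: "M0 \<in> S" "q < f M0"
  defines "H \<equiv> {M. M < m \<and> q < f M}"
  shows "card (S \<inter> H) + m \<le> card H + card S + 1"
proof -
  have Tm: "T \<subseteq> {..<m}"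
    using T(1) unfolding least_loaded_def by blast
  have "{..<m} - T \<subseteq> H"
  proof
    fix M
    assume M: "M \<in> {..<m} - T"
    then have "f M0 \<le> f M"
      using T M0(1) unfolding least_loaded_def by blast
    then show "M \<in> H"
      using M M0(2) unfolding H_def by simp
  qed
  then have "(S \<inter> H) \<union> ({..<m} - T) \<subseteq> H"
    by blast
  moreover have "(S \<inter> H) \<inter> ({..<m} - T) = {}"
    using T(2) by blast
  moreover have "finite H"
    unfolding H_def by simp
  ultimately have "card (S \<inter> H) + card ({..<m} - T) \<le> card H"
    by (metis card_Un_disjoint card_mono finite_Diff finite_Int finite_lessThan)
  moreover have "card ({..<m} - T) = m - card T" "card T \<le> m"
    using Tm by (simp_all add: card_Diff_subset finite_subset card_mono[of "{..<m}", simplified])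
  ultimately show ?thesis
    using T(3) by linarith
qed

lemma balanced_loadsI:
  assumes m: "m \<ge> 2" and s: "s = q * (m - 1) + r" and r: "r \<le> m - 1"
    and le: "\<forall>M<m. f M \<le> q + 1" and high: "card {M. M < m \<and> q < f M} \<le> r"
  shows "balanced_loads m f s"
proof (cases "r < m - 1")
  case True
  then have "s div (m - 1) = q" "s mod (m - 1) = r"
    using s by simp_all
  then show ?thesis
    using le high unfolding balanced_loads_def by simp
next
  case False
  then have s': "s = (q + 1) * (m - 1)"
    using s r by simp
  have "m - 1 \<noteq> 0"
    using m by simp
  then have "s div (m - 1) = q + 1"
    unfolding s' by (rule nonzero_mult_div_cancel_right)
  moreover have "s mod (m - 1) = 0"
    unfolding s' by (rule mod_mult_self2_is_0)
  moreover have "\<forall>M<m. f M \<le> q + 2"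
    using le by auto
  moreover have "{M. M < m \<and> q + 1 < f M} = {}"
    using le by force
  ultimately show ?thesis
    unfolding balanced_loads_def by simp
qed

lemma balanced_loads_step:
  assumes m: "m \<ge> 2" and bal: "balanced_loads m f s"
    and T: "least_loaded m f T" "S \<subseteq> T" "card T \<le> card S + 1"
  shows "balanced_loads m (\<lambda>M. f M + (if M \<in> S then 1 else 0)) (s + card S)"
proof -
  define K q r j where "K = m - 1" and "q = s div K" and "r = s mod K" and "j = card S"
  define g where "g = (\<lambda>M. f M + (if M \<in> S then 1 else 0))"
  define H where "H = {M. M < m \<and> q < f M}"
  have "r < K"
    using m by (simp add: K_def r_def)
  have "s + j = q * K + (r + j)"
    unfolding q_def r_def by (metis add.assoc div_mult_mod_eq)
  have "S \<subseteq> {..<m}"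
    using T unfolding least_loaded_def by blast
  then have "finite S" "j \<le> m"
    unfolding j_def using finite_subset card_mono[of "{..<m}" S] by auto
  have f_le: "f M \<le> q + 1" if "M < m" for M
    using bal that unfolding balanced_loads_def q_def K_def by simp
  have H_card: "card H \<le> r"
    using bal unfolding balanced_loads_def H_def q_def r_def K_def by simp
  have crowded: "card (S \<inter> H) + K \<le> r + j" if "S \<inter> H \<noteq> {}"
  proof -
    obtain M0 where "M0 \<in> S" "q < f M0"
      using \<open>S \<inter> H \<noteq> {}\<close> unfolding H_def by blast
    from least_loaded_overloaded_card[OF T this]
    show ?thesis
      using H_card m unfolding H_def K_def j_def by linarith
  qed
  have "balanced_loads m g (s + j)"
  proof (cases "r + j < K")
    case True
    then have "S \<inter> H = {}"
      using crowded by force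
    have "\<forall>M<m. g M \<le> q + 1"
    proof (intro allI impI)
      fix M
      assume "M < m"
      then show "g M \<le> q + 1"
        using f_le[of M] \<open>S \<inter> H = {}\<close> unfolding g_def H_def by auto
    qed
    moreover have "{M. M < m \<and> q < g M} \<subseteq> H \<union> S"
      unfolding g_def H_def by auto
    then have "card {M. M < m \<and> q < g M} \<le> card (H \<union> S)"
      using \<open>finite S\<close> by (intro card_mono) (simp_all add: H_def)
    then have "card {M. M < m \<and> q < g M} \<le> card H + card S"
      using card_Un_le[of H S] by linarith
    ultimately show ?thesis
      using True H_card \<open>s + j = q * K + (r + j)\<close> m
      by (intro balanced_loadsI[where q = q and r = "r + j"]) (auto simp: K_def j_def)
  next
    case False
    have "\<forall>M<m. g M \<le> q + 2"
    proof (intro allI impI)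
      fix M
      assume "M < m"
      then show "g M \<le> q + 2"
        using f_le[of M] unfolding g_def by simp
    qed
    moreover have "{M. M < m \<and> q + 1 < g M} \<subseteq> S \<inter> H"
      unfolding g_def H_def by (auto split: if_splits dest: f_le)
    then have "card {M. M < m \<and> q + 1 < g M} \<le> card (S \<inter> H)"
      using \<open>finite S\<close> by (intro card_mono) simp_all
    moreover have "card (S \<inter> H) \<le> r + j - K"
      using crowded False by (cases "S \<inter> H = {}") auto
    moreover have "s + j = (q + 1) * K + (r + j - K)"
      using \<open>s + j = q * K + (r + j)\<close> False by simp
    ultimately show ?thesis
      using \<open>r < K\<close> \<open>j \<le> m\<close> m
      by (intro balanced_loadsI[where q = "q + 1" and r = "r + j - K"]) (auto simp: K_def)
  qed
  then show ?thesis
    unfolding g_def j_def .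
qed

lemma balanced_loads_spread:
  assumes m: "m \<ge> 2" and bal: "balanced_loads m f n" and sum: "(\<Sum>M<m. f M) = n"
    and n: "n = d * (m - 1) + r" and r: "r < m - 1"
  shows "\<forall>M<m. f M \<le> (if r = 0 then d else d + 1)"
    and "r = 0 \<Longrightarrow> n \<ge> 1 \<Longrightarrow> \<exists>M<m. f M < d"
    and "m - r \<le> card {M. M < m \<and> f M \<le> d}"
proof -
  have "n div (m - 1) = d" "n mod (m - 1) = r"
    using n r by simp_all
  then have le: "\<forall>M<m. f M \<le> d + 1" and high: "card {M. M < m \<and> d < f M} \<le> r"
    using bal unfolding balanced_loads_def by simp_all
  show all_le: "\<forall>M<m. f M \<le> (if r = 0 then d else d + 1)"
  proof (intro allI impI)
    fix M
    assume "M < m"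
    show "f M \<le> (if r = 0 then d else d + 1)"
    proof (cases "r = 0")
      case True
      then have "M \<notin> {M. M < m \<and> d < f M}"
        using high by simp
      then show ?thesis
        using \<open>M < m\<close> True by simp
    next
      case False
      then show ?thesis
        using le \<open>M < m\<close> by simp
    qed
  qed
  have "{M. M < m \<and> f M \<le> d} = {..<m} - {M. M < m \<and> d < f M}"
    by auto
  moreover have "card ({..<m} - {M. M < m \<and> d < f M}) = m - card {M. M < m \<and> d < f M}"
    by (subst card_Diff_subset) auto
  ultimately show "m - r \<le> card {M. M < m \<and> f M \<le> d}"
    using high by simp
  assume "r = 0" "n \<ge> 1"
  show "\<exists>M<m. f M < d"
  proof (rule ccontr)
    assume "\<not> (\<exists>M<m. f M < d)"
    then have "\<forall>M<m. f M = d"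
      using all_le \<open>r = 0\<close> by (metis le_antisym not_less)
    then have "m * d = (m - 1) * d"
      using sum n \<open>r = 0\<close> by (simp add: mult.commute)
    moreover have "d \<ge> 1"
      using n \<open>r = 0\<close> \<open>n \<ge> 1\<close> by (cases d) auto
    ultimately show False
      using m by simp
  qed
qed

lemma ceiling_divide_eq:
  assumes n: "n = d * k + r" and r: "r < k"
  shows "\<lceil>real n / real k\<rceil> = int (if r = 0 then d else d + 1)"
proof -
  have "real n / real k = real d + real r / real k"
    using n r by (simp add: field_simps)
  moreover have "0 \<le> real r / real k" "real r / real k < 1"
    using r by simp_all
  moreover have "r \<noteq> 0 \<Longrightarrow> 0 < real r / real k"
    using r by simp
  ultimately show ?thesis
    by (auto simp: ceiling_eq_iff)
qed

section \<open>Adding the jobs of one block\<close>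

lemma load_fun_upd_fresh:
  assumes "finite (dom \<sigma>)" "x \<notin> dom \<sigma>"
  shows "load (\<sigma>(x \<mapsto> y)) M = load \<sigma> M + (if M = y then 1 else 0)"
proof -
  have fin: "finite {j. \<sigma> j = Some M}"
    using assms(1) by (rule finite_subset[rotated]) blast
  have "{j. (\<sigma>(x \<mapsto> y)) j = Some M}
      = (if M = y then insert x {j. \<sigma> j = Some M} else {j. \<sigma> j = Some M})"
    using assms(2) by auto
  then show ?thesis
    using fin assms(2) by (auto simp: load_def)
qed

lemma load_map_add_zip:
  assumes "length xs = length ys" "distinct xs" "distinct ys"
    and "set xs \<inter> dom \<sigma> = {}" "finite (dom \<sigma>)"
  shows "load (\<sigma> ++ map_of (zip xs ys)) M = load \<sigma> M + (if M \<in> set ys then 1 else 0)"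
  using assms
proof (induction xs ys rule: list_induct2)
  case Nil
  then show ?case by simp
next
  case (Cons x xs y ys)
  have upd: "\<sigma> ++ map_of (zip (x # xs) (y # ys)) = (\<sigma> ++ map_of (zip xs ys))(x \<mapsto> y)"
    by (rule ext) (simp add: map_add_def)
  have fin: "finite (dom (\<sigma> ++ map_of (zip xs ys)))"
    using Cons.prems Cons.hyps by simp
  have fresh: "x \<notin> dom (\<sigma> ++ map_of (zip xs ys))"
    using Cons.prems Cons.hyps by auto
  have "load (\<sigma> ++ map_of (zip (x # xs) (y # ys))) M = load ((\<sigma> ++ map_of (zip xs ys))(x \<mapsto> y)) M"
    by (simp only: upd)
  also have "\<dots> = load (\<sigma> ++ map_of (zip xs ys)) M + (if M = y then 1 else 0)"
    using fin fresh by (rule load_fun_upd_fresh)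
  also have "\<dots> = load \<sigma> M + (if M \<in> set (y # ys) then 1 else 0)"
    using Cons by auto
  finally show ?case .
qed

lemma sum_load:
  assumes "finite (dom \<sigma>)" "ran \<sigma> \<subseteq> {..<m}"
  shows "(\<Sum>M<m. load \<sigma> M) = card (dom \<sigma>)"
proof -
  have "dom \<sigma> = (\<Union>M<m. {j. \<sigma> j = Some M})"
    using assms(2) by (auto simp: ran_def)
  moreover have "card (\<Union>M<m. {j. \<sigma> j = Some M}) = (\<Sum>M<m. card {j. \<sigma> j = Some M})"
    using assms(1) by (intro card_UN_disjoint) (auto intro: finite_subset[rotated])
  ultimately show ?thesis
    unfolding load_def by simp
qed

lemma inj_on_map_of_zip:
  assumes "length xs = length ys" "distinct xs" "distinct ys"
  shows "inj_on (map_of (zip xs ys)) (set xs)"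
proof (rule inj_onI)
  fix a b
  assume "a \<in> set xs" "b \<in> set xs" and eq: "map_of (zip xs ys) a = map_of (zip xs ys) b"
  then obtain i j where "i < length xs" "j < length xs" "a = xs ! i" "b = xs ! j"
    by (auto simp: in_set_conv_nth)
  with eq assms show "a = b"
    by (simp add: map_of_zip_nth nth_eq_iff_index_eq)
qed

text \<open>\<open>T\<close> are the \<open>|B|\<close> least loaded machines and \<open>S\<subseteq>T\<close> those receiving a job of \<open>B\<close>; the
  machine dropped for the parent cut vertex is the only one of \<open>T\<close> that \<open>S\<close> may miss.\<close>
definition block_extension :: "nat \<Rightarrow> ('a \<rightharpoonup> nat) \<Rightarrow> 'a set \<Rightarrow> ('a \<rightharpoonup> nat) \<Rightarrow> bool" where
  "block_extension m \<sigma> B \<sigma>' \<longleftrightarrow>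
     dom \<sigma>' = dom \<sigma> \<union> B \<and> \<sigma> \<subseteq>\<^sub>m \<sigma>' \<and> ran \<sigma>' \<subseteq> ran \<sigma> \<union> {..<m} \<and> inj_on \<sigma>' B \<and>
     (\<exists>S T. S \<subseteq> T \<and> least_loaded m (load \<sigma>) T \<and> card T \<le> card S + 1 \<and>
        card S = card (B - dom \<sigma>) \<and> (\<forall>M. load \<sigma>' M = load \<sigma> M + (if M \<in> S then 1 else 0)))"

lemma inj_on_map_add_zip:
  assumes len: "length xs = length ys" and dist: "distinct xs" "distinct ys"
    and xs: "set xs = B - dom \<sigma>"
    and old_inj: "inj_on \<sigma> (B \<inter> dom \<sigma>)"
    and old_fresh: "\<forall>x\<in>B \<inter> dom \<sigma>. \<sigma> x \<notin> Some ` set ys"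
  shows "inj_on (\<sigma> ++ map_of (zip xs ys)) B"
proof -
  let ?N = "map_of (zip xs ys)"
  have new: "(\<sigma> ++ ?N) x \<in> Some ` set ys" if "x \<in> B - dom \<sigma>" for x
  proof -
    have "x \<in> dom ?N"
      using that len xs by simp
    then obtain y where "?N x = Some y"
      by blast
    then show ?thesis
      by (auto dest: map_of_SomeD set_zip_rightD)
  qed
  have old: "(\<sigma> ++ ?N) z = \<sigma> z" if "z \<in> dom \<sigma>" for z
  proof -
    have "z \<notin> dom ?N"
      using that len xs by simp
    then show ?thesis
      by (rule map_add_dom_app_simps(3))
  qed
  have "(\<sigma> ++ ?N) x = ?N x" if "x \<in> set xs" for x
    using that len by (intro map_add_dom_app_simps(1)) simp
  then have "inj_on (\<sigma> ++ ?N) (B - dom \<sigma>)"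
    using inj_on_map_of_zip[OF len dist] xs by (simp add: inj_on_def)
  moreover have "inj_on (\<sigma> ++ ?N) (B \<inter> dom \<sigma>)"
    using old_inj by (simp add: inj_on_def old)
  moreover have "(\<sigma> ++ ?N) x \<noteq> (\<sigma> ++ ?N) z" if "x \<in> B - dom \<sigma>" "z \<in> B \<inter> dom \<sigma>" for x z
  proof -
    have "(\<sigma> ++ ?N) z \<notin> Some ` set ys"
      using that old old_fresh by simp
    with new[OF that(1)] show ?thesis
      by metis
  qed
  ultimately have "inj_on (\<sigma> ++ ?N) ((B - dom \<sigma>) \<union> (B \<inter> dom \<sigma>))"
    unfolding inj_on_Un by blast
  then show ?thesis
    by (simp add: Un_Diff_Int)
qed

lemma block_extension_map_add_zip:
  assumes len: "length xs = length ys" and dist: "distinct xs" "distinct ys"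
    and xs: "set xs = B - dom \<sigma>" and fin: "finite (dom \<sigma>)"
    and T: "least_loaded m (load \<sigma>) T" "set ys \<subseteq> T" "card T \<le> length ys + 1"
    and old_inj: "inj_on \<sigma> (B \<inter> dom \<sigma>)"
    and old_fresh: "\<forall>x\<in>B \<inter> dom \<sigma>. \<sigma> x \<notin> Some ` set ys"
  shows "block_extension m \<sigma> B (\<sigma> ++ map_of (zip xs ys))"
  unfolding block_extension_def
proof (intro conjI exI)
  have disj: "dom \<sigma> \<inter> dom (map_of (zip xs ys)) = {}"
    using len xs by auto
  show "\<sigma> \<subseteq>\<^sub>m \<sigma> ++ map_of (zip xs ys)"
    using map_add_comm[OF disj] by simp
  show "ran (\<sigma> ++ map_of (zip xs ys)) \<subseteq> ran \<sigma> \<union> {..<m}"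
    using ran_map_add[OF disj] ran_map_of_zip[OF len dist(1)] T(1,2)
    unfolding least_loaded_def by blast
  show "dom (\<sigma> ++ map_of (zip xs ys)) = dom \<sigma> \<union> B"
    using len xs by auto
  show "inj_on (\<sigma> ++ map_of (zip xs ys)) B"
    using inj_on_map_add_zip[OF len dist xs old_inj old_fresh] .
  show "set ys \<subseteq> T" "least_loaded m (load \<sigma>) T"
    using T by simp_all
  show "card T \<le> card (set ys) + 1"
    using T(3) dist(2) by (simp add: distinct_card)
  show "card (set ys) = card (B - dom \<sigma>)"
    using len dist xs by (metis distinct_card)
  show "\<forall>M. load (\<sigma> ++ map_of (zip xs ys)) M = load \<sigma> M + (if M \<in> set ys then 1 else 0)"
    using load_map_add_zip[OF len dist _ fin] xs by blast
qed

lemma block_extension_balanced: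
  assumes ext: "block_extension m \<sigma> B \<sigma>'" and fin: "finite (dom \<sigma>)" "finite B"
    and m: "m \<ge> 2" and bal: "balanced_loads m (load \<sigma>) (card (dom \<sigma>))"
  shows "balanced_loads m (load \<sigma>') (card (dom \<sigma>'))"
proof -
  obtain S T where ST: "S \<subseteq> T" "least_loaded m (load \<sigma>) T" "card T \<le> card S + 1"
      "card S = card (B - dom \<sigma>)" "\<forall>M. load \<sigma>' M = load \<sigma> M + (if M \<in> S then 1 else 0)"
    and dom': "dom \<sigma>' = dom \<sigma> \<union> B"
    using ext unfolding block_extension_def by blast
  have "dom \<sigma>' = dom \<sigma> \<union> (B - dom \<sigma>)"
    using dom' by blast
  moreover have "card (dom \<sigma> \<union> (B - dom \<sigma>)) = card (dom \<sigma>) + card (B - dom \<sigma>)"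
    using fin by (intro card_Un_disjoint) auto
  ultimately have "card (dom \<sigma>') = card (dom \<sigma>) + card S"
    using ST(4) by simp
  moreover have "load \<sigma>' = (\<lambda>M. load \<sigma> M + (if M \<in> S then 1 else 0))"
    using ST(5) by blast
  ultimately show ?thesis
    using balanced_loads_step[OF m bal ST(2,1,3)] by simp
qed

lemma smallest_machines_least_loaded:
  "smallest_machines m \<sigma> k Ls \<Longrightarrow> least_loaded m (load \<sigma>) (set Ls)"
  unfolding smallest_machines_def least_loaded_def by simp

lemma greedy_step_fresh_block:
  assumes step: "greedy_step m \<sigma> B None \<sigma>'"
    and fresh: "B \<inter> dom \<sigma> = {}" and fin: "finite (dom \<sigma>)"
  shows "block_extension m \<sigma> B \<sigma>'"
proof -
  obtain Ls Lj where sm: "smallest_machines m \<sigma> (card B) Ls"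
    and Lj: "distinct Lj" "set Lj = B" and \<sigma>': "\<sigma>' = \<sigma> ++ map_of (zip Lj Ls)"
    using step unfolding greedy_step_def by auto
  have Ls: "distinct Ls" "length Ls = card B"
    using sm unfolding smallest_machines_def by simp_all
  show ?thesis
    unfolding \<sigma>'
  proof (rule block_extension_map_add_zip)
    show "length Lj = length Ls"
      using Lj Ls by (metis distinct_card)
    show "card (set Ls) \<le> length Ls + 1"
      using card_length[of Ls] by simp
    show "set Lj = B - dom \<sigma>"
      using Lj fresh by blast
  qed (use Lj Ls fresh fin smallest_machines_least_loaded[OF sm] in simp_all)
qed

lemma greedy_step_parent_block:
  assumes step: "greedy_step m \<sigma> B (Some u) \<sigma>'"
    and parent: "B \<inter> dom \<sigma> = {u}" and fin: "finite (dom \<sigma>)"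
  shows "block_extension m \<sigma> B \<sigma>'"
proof -
  obtain Ls Lj M' where sm: "smallest_machines m \<sigma> (card B) Ls"
    and Lj: "distinct Lj" "set Lj = B" and M': "\<sigma> u = Some M'"
    and \<sigma>': "\<sigma>' = \<sigma> ++ map_of (zip (remove1 u Lj)
                        (if M' \<in> set Ls then remove1 M' Ls else butlast Ls))"
    using step unfolding greedy_step_def by auto
  define Ls' where "Ls' = (if M' \<in> set Ls then remove1 M' Ls else butlast Ls)"
  have Ls: "distinct Ls" "length Ls = card B"
    using sm unfolding smallest_machines_def by simp_all
  have u: "u \<in> B"
    using parent by blast
  have Ls': "distinct Ls'" "set Ls' \<subseteq> set Ls" "length Ls' = length Ls - 1" "M' \<notin> set Ls'"
    using Ls(1) by (auto simp: Ls'_def distinct_butlast length_remove1 dest: in_set_butlastD)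
  show ?thesis
    unfolding \<sigma>' Ls'_def[symmetric]
  proof (rule block_extension_map_add_zip)
    show "length (remove1 u Lj) = length Ls'"
      using Lj Ls Ls'(3) u by (metis distinct_card length_remove1)
    show "card (set Ls) \<le> length Ls' + 1"
      using Ls'(3) u Ls(2) Lj using card_length[of Ls] by linarith
    show "set (remove1 u Lj) = B - dom \<sigma>"
      using Lj parent by auto
    show "\<forall>x\<in>B \<inter> dom \<sigma>. \<sigma> x \<notin> Some ` set Ls'"
      using parent M' Ls'(4) by auto
    show "inj_on \<sigma> (B \<inter> dom \<sigma>)"
      using parent by simp
  qed (use Lj Ls' fin smallest_machines_least_loaded[OF sm] in simp_all)
qed

lemma greedy_step_block_extension:
  assumes step: "greedy_step m \<sigma> B (assigned_parent par \<sigma> B) \<sigma>'"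
    and fresh: "B \<inter> dom \<sigma> \<subseteq> {u. par (Inl B) = Some (Inr u)}"
    and parent_in_block: "\<And>u. par (Inl B) = Some (Inr u) \<Longrightarrow> u \<in> B"
    and fin: "finite (dom \<sigma>)"
  shows "block_extension m \<sigma> B \<sigma>'"
proof (cases "assigned_parent par \<sigma> B")
  case None
  have "B \<inter> dom \<sigma> = {}"
    using fresh None by (auto simp: assigned_parent_def)
  with step None fin show ?thesis
    by (simp add: greedy_step_fresh_block)
next
  case (Some u)
  then have "par (Inl B) = Some (Inr u)" "u \<in> dom \<sigma>"
    by (auto simp: assigned_parent_def split: option.splits sum.splits if_splits)
  then have "B \<inter> dom \<sigma> = {u}"
    using fresh parent_in_block by auto
  with step Some fin show ?thesis
    by (simp add: greedy_step_parent_block)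
qed

section \<open>Blocks\<close>

lemma clique_subset_block:
  assumes g: "graph J E" and S: "clique J E S" "S \<noteq> {}"
  shows "\<exists>B. is_block J E B \<and> S \<subseteq> B"
proof -
  define C where "C = {T. clique J E T \<and> S \<subseteq> T}"
  have "C \<subseteq> Pow J"
    unfolding C_def clique_def by blast
  moreover have "finite J"
    using g unfolding graph_def by simp
  ultimately have "finite C"
    by (rule finite_subset[OF _ finite_Pow_iff[THEN iffD2]])
  moreover have "S \<in> C"
    unfolding C_def using S by simp
  ultimately obtain B where B: "B \<in> C" and max: "\<forall>T\<in>C. B \<subseteq> T \<longrightarrow> B = T"
    by (meson finite_has_maximal2)
  have "is_block J E B"
    unfolding is_block_def
  proof (intro conjI allI impI)
    show "clique J E B" "B \<noteq> {}"
      using B S(2) unfolding C_def by auto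
    show "T = B" if "clique J E T \<and> B \<subseteq> T" for T
      using that B max unfolding C_def by auto
  qed
  then show ?thesis
    using B unfolding C_def by blast
qed

lemma Union_blocks:
  assumes "graph J E"
  shows "\<Union>{B. is_block J E B} = J"
proof
  show "\<Union>{B. is_block J E B} \<subseteq> J"
    unfolding is_block_def clique_def by blast
  show "J \<subseteq> \<Union>{B. is_block J E B}"
  proof
    fix v
    assume "v \<in> J"
    then have "clique J E {v}"
      unfolding clique_def by simp
    then show "v \<in> \<Union>{B. is_block J E B}"
      using clique_subset_block[OF assms] by blast
  qed
qed

lemma edge_in_block:
  assumes g: "graph J E" and e: "E x y"
  shows "\<exists>B. is_block J E B \<and> x \<in> B \<and> y \<in> B"
proof -
  have "clique J E {x, y}"
    using g e unfolding graph_def clique_def by auto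
  then show ?thesis
    using clique_subset_block[OF g] by blast
qed

section \<open>Runs of the greedy algorithm\<close>

lemma inj_on_map_le:
  assumes "\<sigma> \<subseteq>\<^sub>m \<sigma>'" "B \<subseteq> dom \<sigma>" "inj_on \<sigma> B"
  shows "inj_on \<sigma>' B"
proof -
  have "\<sigma> x = \<sigma>' x" if "x \<in> B" for x
    using assms(1,2) that unfolding map_le_def by blast
  then show ?thesis
    using assms(3) inj_on_cong by metis
qed

fun fresh_blocks :: "('a set + 'a \<Rightarrow> ('a set + 'a) option) \<Rightarrow> 'a set \<Rightarrow> 'a set list \<Rightarrow> bool" where
  "fresh_blocks par D [] \<longleftrightarrow> True"
| "fresh_blocks par D (B # Bs) \<longleftrightarrow>
     B \<inter> D \<subseteq> {u. par (Inl B) = Some (Inr u)} \<and> fresh_blocks par (D \<union> B) Bs"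

lemma greedy_exec_extends:
  assumes "greedy_exec m par \<sigma> Bs \<sigma>'"
    and "fresh_blocks par (dom \<sigma>) Bs"
    and "\<forall>B u. par (Inl B) = Some (Inr u) \<longrightarrow> u \<in> B"
    and "\<forall>B\<in>set Bs. finite B" "finite (dom \<sigma>)" "m \<ge> 2"
    and "balanced_loads m (load \<sigma>) (card (dom \<sigma>))"
  shows "dom \<sigma>' = dom \<sigma> \<union> \<Union>(set Bs) \<and> \<sigma> \<subseteq>\<^sub>m \<sigma>' \<and> ran \<sigma>' \<subseteq> ran \<sigma> \<union> {..<m}
    \<and> (\<forall>B\<in>set Bs. inj_on \<sigma>' B) \<and> balanced_loads m (load \<sigma>') (card (dom \<sigma>'))"
  using assms
proof (induction rule: greedy_exec.induct)
  case (exec_nil \<sigma>)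
  then show ?case by simp
next
  case (exec_cons \<sigma> B \<sigma>1 Bs \<sigma>'')
  have ext: "block_extension m \<sigma> B \<sigma>1"
  proof (rule greedy_step_block_extension[OF exec_cons.hyps(1)])
    show "B \<inter> dom \<sigma> \<subseteq> {u. par (Inl B) = Some (Inr u)}"
      using exec_cons.prems(1) by simp
    show "\<And>u. par (Inl B) = Some (Inr u) \<Longrightarrow> u \<in> B"
      using exec_cons.prems(2) by blast
  qed (use exec_cons.prems(4) in simp)
  then have dom1: "dom \<sigma>1 = dom \<sigma> \<union> B" and le1: "\<sigma> \<subseteq>\<^sub>m \<sigma>1"
    and ran1: "ran \<sigma>1 \<subseteq> ran \<sigma> \<union> {..<m}" and inj1: "inj_on \<sigma>1 B"
    unfolding block_extension_def by blast+
  have bal1: "balanced_loads m (load \<sigma>1) (card (dom \<sigma>1))"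
    using block_extension_balanced[OF ext] exec_cons.prems by simp
  have IH: "dom \<sigma>'' = dom \<sigma>1 \<union> \<Union>(set Bs) \<and> \<sigma>1 \<subseteq>\<^sub>m \<sigma>'' \<and> ran \<sigma>'' \<subseteq> ran \<sigma>1 \<union> {..<m}
      \<and> (\<forall>B\<in>set Bs. inj_on \<sigma>'' B) \<and> balanced_loads m (load \<sigma>'') (card (dom \<sigma>''))"
  proof (rule exec_cons.IH)
    show "fresh_blocks par (dom \<sigma>1) Bs" "finite (dom \<sigma>1)"
      using exec_cons.prems dom1 by simp_all
  qed (use exec_cons.prems bal1 in simp_all)
  have "\<sigma>1 \<subseteq>\<^sub>m \<sigma>''"
    using IH by blast
  then have "inj_on \<sigma>'' B"
    by (rule inj_on_map_le[OF _ _ inj1]) (simp add: dom1)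
  show ?case
  proof (intro conjI)
    show "dom \<sigma>'' = dom \<sigma> \<union> \<Union>(set (B # Bs))"
      using IH dom1 by auto
    show "\<sigma> \<subseteq>\<^sub>m \<sigma>''"
      using map_le_trans[OF le1] IH by simp
    show "ran \<sigma>'' \<subseteq> ran \<sigma> \<union> {..<m}"
      using IH ran1 by auto
    show "\<forall>B'\<in>set (B # Bs). inj_on \<sigma>'' B'"
      using IH \<open>inj_on \<sigma>'' B\<close> by simp
    show "balanced_loads m (load \<sigma>'') (card (dom \<sigma>''))"
      using IH by blast
  qed
qed

lemma rooting_shared_vertex:
  assumes root: "rooting J E par" and B: "is_block J E B" "is_block J E B'"
    and ne: "B \<noteq> B'" and x: "x \<in> B" "x \<in> B'"
  shows "par (Inl B') = Some (Inr x) \<or> (par (Inl B) = Some (Inr x) \<and> par (Inr x) = Some (Inl B'))"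
proof -
  have "is_cut J E x"
    unfolding is_cut_def using B ne x by blast
  then have "bc_adj J E (Inl B) (Inr x)" "bc_adj J E (Inl B') (Inr x)"
    unfolding bc_adj_def using B x by blast+
  then show ?thesis
    using root ne unfolding rooting_def by (metis option.inject sum.inject(1))
qed

lemma fresh_blocks_preorder:
  assumes root: "rooting J E par"
  shows "distinct xs \<Longrightarrow> sorted_wrt (\<lambda>a b. \<not> anc par b a) xs \<Longrightarrow> \<forall>x\<in>set xs. bc_node J E x
    \<Longrightarrow> \<forall>B. Inl B \<in> set xs \<longrightarrow> B \<inter> D \<subseteq> {u. par (Inl B) = Some (Inr u)}
    \<Longrightarrow> fresh_blocks par D (map projl (filter isl xs))"
proof (induction xs arbitrary: D)
  case Nil
  then show ?case by simp
next
  case (Cons x xs)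
  show ?case
  proof (cases x)
    case (Inr v)
    then show ?thesis
      using Cons by simp
  next
    case (Inl B)
    have later: "B' \<inter> (D \<union> B) \<subseteq> {u. par (Inl B') = Some (Inr u)}" if B': "Inl B' \<in> set xs" for B'
    proof
      fix y
      assume y: "y \<in> B' \<inter> (D \<union> B)"
      show "y \<in> {u. par (Inl B') = Some (Inr u)}"
      proof (cases "y \<in> D")
        case True
        then show ?thesis
          using Cons.prems(4) B' y by auto
      next
        case False
        have blocks: "is_block J E B" "is_block J E B'"
          using Cons.prems(3) Inl B' unfolding bc_node_def by force+
        have "B \<noteq> B'"
          using Cons.prems(1) Inl B' by auto
        moreover have "\<not> anc par (Inl B') (Inl B)"
          using Cons.prems(2) Inl B' by simp
        then have "\<not> (par (Inl B) = Some (Inr y) \<and> par (Inr y) = Some (Inl B'))"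
          unfolding anc_def by (meson converse_rtranclp_into_rtranclp rtranclp.rtrancl_refl)
        ultimately show ?thesis
          using rooting_shared_vertex[OF root blocks] y False by blast
      qed
    qed
    have "fresh_blocks par (D \<union> B) (map projl (filter isl xs))"
      using Cons.IH[of "D \<union> B"] Cons.prems later by simp
    then show ?thesis
      using Cons.prems(4) Inl by simp
  qed
qed

lemma preorder_traversal_fresh_blocks:
  assumes root: "rooting J E par" and pre: "preorder_traversal par {x. bc_node J E x} ns"
  shows "fresh_blocks par {} (map projl (filter isl ns))"
proof -
  have "sorted_wrt (\<lambda>a b. \<not> anc par b a) ns"
    using pre unfolding preorder_traversal_def sorted_wrt_iff_nth_less by (meson leD order.strict_trans)
  then show ?thesis
    using fresh_blocks_preorder[OF root, of ns "{}"] pre unfolding preorder_traversal_def by simp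
qed

lemma preorder_traversal_blocks:
  assumes "preorder_traversal par {x. bc_node J E x} ns"
  shows "set (map projl (filter isl ns)) = {B. is_block J E B}"
proof -
  have "B \<in> set (map projl (filter isl ns)) \<longleftrightarrow> Inl B \<in> set ns" for B
    by (force simp: image_iff)
  then show ?thesis
    using assms unfolding preorder_traversal_def bc_node_def by auto
qed

lemma greedy_output_schedule:
  assumes g: "graph J E" and m: "m \<ge> 2" and out: "greedy_output J E m \<sigma>"
  shows "is_schedule J E m \<sigma> \<and> balanced_loads m (load \<sigma>) (card J)"
proof -
  obtain par ns where root: "rooting J E par"
    and pre: "preorder_traversal par {x. bc_node J E x} ns"
    and exec: "greedy_exec m par Map.empty (map projl (filter isl ns)) \<sigma>"
    using out unfolding greedy_output_def by blast
  note blocks = preorder_traversal_blocks[OF pre]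
  have parent: "\<forall>B u. par (Inl B) = Some (Inr u) \<longrightarrow> u \<in> B"
    using root unfolding rooting_def bc_adj_def by blast
  have fin: "\<forall>B\<in>set (map projl (filter isl ns)). finite B"
  proof
    fix B
    assume "B \<in> set (map projl (filter isl ns))"
    then have "B \<subseteq> J"
      using blocks unfolding is_block_def clique_def by blast
    then show "finite B"
      using g unfolding graph_def by (blast intro: finite_subset)
  qed
  have "fresh_blocks par (dom Map.empty) (map projl (filter isl ns))"
    using preorder_traversal_fresh_blocks[OF root pre] by simp
  moreover have "finite (dom Map.empty)"
    by simp
  moreover have "balanced_loads m (load Map.empty) (card (dom Map.empty))"
    unfolding balanced_loads_def load_def by simp
  ultimately have ext: "dom \<sigma> = \<Union>(set (map projl (filter isl ns))) \<and> ran \<sigma> \<subseteq> {..<m}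
      \<and> (\<forall>B\<in>set (map projl (filter isl ns)). inj_on \<sigma> B) \<and> balanced_loads m (load \<sigma>) (card (dom \<sigma>))"
    using greedy_exec_extends[OF exec _ parent fin _ m] by simp
  have dom: "dom \<sigma> = J"
    using ext Union_blocks[OF g] blocks by simp
  have ran: "ran \<sigma> \<subseteq> {..<m}" and inj: "\<forall>B\<in>{B. is_block J E B}. inj_on \<sigma> B"
    and bal: "balanced_loads m (load \<sigma>) (card (dom \<sigma>))"
    using ext unfolding blocks by blast+
  have "\<sigma> x \<noteq> \<sigma> y" if e: "E x y" for x y
  proof -
    obtain B where "is_block J E B" "x \<in> B" "y \<in> B"
      using edge_in_block[OF g e] by blast
    moreover have "x \<noteq> y"
      using g e unfolding graph_def by blast
    ultimately show ?thesis
      using inj by (auto dest: inj_onD)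
  qed
  then show ?thesis
    using dom ran bal unfolding is_schedule_def by auto
qed

text \<open>The block-graph and clique-number hypotheses only ensure that a greedy run exists.\<close>

theorem mainTheorem3:
  fixes J :: "'a set" and E :: "'a \<Rightarrow> 'a \<Rightarrow> bool" and m n d r :: nat
    and \<sigma> :: "'a \<rightharpoonup> nat"
  assumes "graph J E" and "block_graph J E"
    and "m \<ge> 2" and "n = card J" and "n \<ge> 1"
    and "clique_num_le J E m"
    and "n = d * (m - 1) + r" and "r \<le> m - 2"
    and "greedy_output J E m \<sigma>"
  shows "is_schedule J E m \<sigma>
    \<and> (\<forall>M < m. real (load \<sigma> M) \<le> ceiling (real n / real (m - 1)))
    \<and> (r = 0 \<longrightarrow> (\<exists>M < m. real (load \<sigma> M) < ceiling (real n / real (m - 1))))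
    \<and> (r > 0 \<longrightarrow> card {M. M < m \<and> real (load \<sigma> M) < ceiling (real n / real (m - 1))} \<ge> m - r)"
proof -
  have sched: "is_schedule J E m \<sigma>" and bal: "balanced_loads m (load \<sigma>) n"
    using greedy_output_schedule[OF assms(1,3,9)] assms(4) by simp_all
  have "finite J"
    using assms(1) unfolding graph_def by simp
  then have sum: "(\<Sum>M<m. load \<sigma> M) = n"
    using sched sum_load[of \<sigma> m] assms(4) unfolding is_schedule_def by simp
  have r: "r < m - 1"
    using assms(3,8) by simp
  note spread = balanced_loads_spread[OF assms(3) bal sum assms(7) r]
  have ceil: "\<lceil>real n / real (m - 1)\<rceil> = int (if r = 0 then d else d + 1)"
    using ceiling_divide_eq[OF assms(7) r] .
  show ?thesis
    unfolding ceil using sched spread r assms(5) by (auto simp: less_Suc_eq_le simp flip: of_nat_Suc)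
qed

end
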